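(* Let $\hat X \in U(d)$ and define $F = \int d\psi\, |\langle\psi|\hat X|\psi\rangle|^2$ and $D^2 = \int d\psi\, |\langle\psi|\hat X|\psi\rangle|^4 - F^2$. Then $$F = \frac{d + |\mathrm{tr}(\hat X)|^2}{d(d+1)},$$ $$D^2 = \frac{2d(d+3) + 4(d+2)|\mathrm{tr}(\hat X)|^2 + |\mathrm{tr}(\hat X^2)|^2 + |\mathrm{tr}(\hat X)|^4 + 2\,\mathrm{Re}\bigl[\mathrm{tr}(\hat X^2)\,\mathrm{tr}(\hat X^\dagger)^2\bigr]}{d(d+1)(d+2)(d+3)} - F^2.$$
   Context: $d\psi$ denotes the unitarily invariant (Haar-induced) probability measure on unit vectors of $\mathbb{C}^d$. *)

theory Defs
  imports "HOL-Analysis.Analysis" "HOL-Probability.Probability"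
begin

definition cmat_adj :: "complex^'n^'n \<Rightarrow> complex^'n^'n" where
  "cmat_adj A = (\<chi> i j. cnj (A $ j $ i))"

definition unitary_cmat :: "complex^'n^'n \<Rightarrow> bool" where
  "unitary_cmat U \<longleftrightarrow> U ** cmat_adj U = mat 1 \<and> cmat_adj U ** U = mat 1"

definition braket :: "complex^'n \<Rightarrow> complex^'n^'n \<Rightarrow> complex" where
  "braket \<psi> X = (\<Sum>i\<in>UNIV. cnj (\<psi> $ i) * (X *v \<psi>) $ i)"

definition haar_state_measure :: "(complex^'n) measure \<Rightarrow> bool" where
  "haar_state_measure M \<longleftrightarrow>
     prob_space M \<and> sets M = sets borel \<and> (AE \<psi> in M. norm \<psi> = 1) \<and>
     (\<forall>U. unitary_cmat U \<longrightarrow> distr M borel (\<lambda>\<psi>. U *v \<psi>) = M)"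

end

theory Submission
  imports Defs
begin

(*
  Write P_a(psi) = |psi_a|^2. Invariance of the state measure under three kinds of unitaries
  determines all moments of psi up to degree four:
  - a phase on one coordinate kills every monomial conj(psi_I) psi_J whose index multisets differ;
  - permutations of coordinates make the moments symmetric;
  - a Hadamard rotation in the plane of two coordinates a, b turns P_a P_b into
    (P_a^2 + P_b^2 - psi_a^2 conj(psi_b)^2 - psi_b^2 conj(psi_a)^2)/4, relating E[P_a P_b q] to E[P_a^2 q].
  Together with sum_r P_r = 1 this gives the Dirichlet moments E[P_a^k] = k!/(d(d+1)...(d+k-1)) and the
  Wick formula E[conj(psi_I) psi_J] = #{matchings of I with J}/(d(d+1)...(d+k-1)) for k = 2, 4.
  Expanding a product of k expectation values <psi|A|psi> turns it into a sum over permutations of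
  products of traces, which for the factors X, X^+, X, X^+ with X unitary collapses to the stated
  polynomial in tr X and tr X^2.
*)

section \<open>Unitary test matrices\<close>

definition phase_cmat :: "'n \<Rightarrow> complex \<Rightarrow> complex^'n^'n" where
  "phase_cmat a c = (\<chi> i j. if i = j then (if i = a then c else 1) else 0)"

lemma phase_cmat_mult_vec: "phase_cmat a c *v \<psi> = (\<chi> i. if i = a then c * \<psi>$i else \<psi>$i)"
  by (simp add: phase_cmat_def matrix_vector_mult_def vec_eq_iff if_distrib[of "\<lambda>x. x * _"] cong: if_cong)

lemma unitary_phase_cmat:
  assumes "cmod c = 1"
  shows "unitary_cmat (phase_cmat a c)"
proof -
  have "cnj c * c = 1"
    using complex_norm_square[of c] assms by (simp add: mult.commute)
  then show ?thesis
    unfolding unitary_cmat_def cmat_adj_def phase_cmat_def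
    by (auto simp: matrix_matrix_mult_def vec_eq_iff mat_def if_distrib[of "\<lambda>x. x * _"] mult.commute
        cong: if_cong)
qed

definition perm_cmat :: "('n \<Rightarrow> 'n) \<Rightarrow> complex^'n^'n" where
  "perm_cmat p = (\<chi> i j. if j = p i then 1 else 0)"

lemma perm_cmat_mult_vec: "perm_cmat p *v \<psi> = (\<chi> i. \<psi> $ p i)"
  by (simp add: perm_cmat_def matrix_vector_mult_def vec_eq_iff if_distrib[of "\<lambda>x. x * _"] cong: if_cong)

lemma unitary_perm_cmat:
  assumes "bij p"
  shows "unitary_cmat (perm_cmat p)"
proof -
  have rows: "(\<Sum>j\<in>UNIV. (if j = p i then 1 else 0) * (if j = p k then 1 else 0)) = (if i = k then 1 else (0::complex))"
    for i k
    using bij_is_inj[OF assms] by (simp add: if_distrib[of "\<lambda>x. x * _"] inj_eq cong: if_cong)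
  have columns: "(\<Sum>j\<in>UNIV. (if i = p j then 1 else 0) * (if k = p j then 1 else 0)) = (if i = k then 1 else (0::complex))"
    for i k
    using sum.reindex_bij_betw[OF assms,
        of "\<lambda>j. (if i = j then 1 else 0) * (if k = j then 1 else (0::complex))"]
    by (simp add: if_distrib[of "\<lambda>x. x * _"] cong: if_cong)
  have "cnj (if c then 1 else 0) = (if c then 1 else (0::complex))" for c
    by simp
  with rows columns show ?thesis
    unfolding unitary_cmat_def cmat_adj_def perm_cmat_def
    by (simp add: matrix_matrix_mult_def mat_def vec_eq_iff)
qed

definition hadamard_cmat :: "'n \<Rightarrow> 'n \<Rightarrow> complex^'n^'n" where
  "hadamard_cmat a b = (\<chi> i j.
     if i \<in> {a, b} \<and> j \<in> {a, b} then (if i = b \<and> j = b then - 1 else 1) / of_real (sqrt 2)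
     else if i = j then 1 else 0)"

lemma sum_UNIV_two:
  fixes f :: "'n::finite \<Rightarrow> complex"
  assumes "a \<noteq> b" "\<And>j. j \<noteq> a \<Longrightarrow> j \<noteq> b \<Longrightarrow> f j = 0"
  shows "sum f UNIV = f a + f b"
proof -
  have "sum f UNIV = sum f {a, b}"
    by (rule sum.mono_neutral_right) (use assms in auto)
  then show ?thesis using assms by simp
qed

context
  fixes a b :: "'n::finite"
  assumes ab: "a \<noteq> b"
begin

lemma hadamard_cmat_mult_vec:
  "hadamard_cmat a b *v \<psi> = (\<chi> i. if i = a then (\<psi>$a + \<psi>$b) / of_real (sqrt 2)
     else if i = b then (\<psi>$a - \<psi>$b) / of_real (sqrt 2) else \<psi>$i)"
proof -
  have "(hadamard_cmat a b *v \<psi>) $ i = hadamard_cmat a b $ i $ a * \<psi>$a + hadamard_cmat a b $ i $ b * \<psi>$b"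
    if "i = a \<or> i = b" for i
    unfolding matrix_vector_mult_def vec_lambda_beta
    by (rule sum_UNIV_two[OF ab]) (use that in \<open>auto simp: hadamard_cmat_def\<close>)
  moreover have "(hadamard_cmat a b *v \<psi>) $ i = \<psi>$i" if "i \<noteq> a" "i \<noteq> b" for i
    using that by (simp add: hadamard_cmat_def matrix_vector_mult_def if_distrib[of "\<lambda>x. x * _"] cong: if_cong)
  ultimately show ?thesis
    using ab by (auto simp: vec_eq_iff hadamard_cmat_def diff_divide_distrib add_divide_distrib)
qed

lemma unitary_hadamard_cmat: "unitary_cmat (hadamard_cmat a b)"
proof -
  have adj: "cmat_adj (hadamard_cmat a b) = hadamard_cmat a b"
    by (auto simp: cmat_adj_def hadamard_cmat_def vec_eq_iff)
  have sqrt2: "of_real (sqrt 2) * of_real (sqrt 2) = (2::complex)"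
    by (simp flip: of_real_mult)
  have "(hadamard_cmat a b ** hadamard_cmat a b) $ i $ k = mat 1 $ i $ k" for i k
  proof -
    have "(hadamard_cmat a b ** hadamard_cmat a b) $ i $ k = (hadamard_cmat a b *v column k (hadamard_cmat a b)) $ i"
      by (simp add: matrix_matrix_mult_def matrix_vector_mult_def column_def)
    then show ?thesis
      unfolding hadamard_cmat_mult_vec using ab
      by (auto simp: column_def hadamard_cmat_def mat_def sqrt2)
  qed
  then have "hadamard_cmat a b ** hadamard_cmat a b = mat 1"
    by (simp add: vec_eq_iff)
  then show ?thesis
    unfolding unitary_cmat_def adj by simp
qed

end

definition coord_prob :: "'n \<Rightarrow> complex^'n \<Rightarrow> complex" where
  "coord_prob a \<psi> = cnj (\<psi>$a) * \<psi>$a"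

lemma continuous_on_coord_prob [continuous_intros]:
  "continuous_on S f \<Longrightarrow> continuous_on S (\<lambda>x. coord_prob a (f x))"
  unfolding coord_prob_def by (intro continuous_intros)

lemma sum_coord_prob:
  assumes "norm \<psi> = 1"
  shows "(\<Sum>r\<in>UNIV. coord_prob r \<psi>) = 1"
proof -
  have "(\<Sum>r\<in>UNIV. coord_prob r \<psi>) = of_real (\<Sum>r\<in>UNIV. (cmod (\<psi>$r))^2)"
    by (simp add: coord_prob_def complex_norm_square mult.commute del: of_real_power)
  also have "(\<Sum>r\<in>UNIV. (cmod (\<psi>$r))^2) = (norm \<psi>)^2"
    by (simp add: norm_vec_def L2_set_def sum_nonneg)
  finally show ?thesis
    using assms by simp
qed

lemma coord_prob_perm_cmat: "coord_prob r (perm_cmat p *v \<psi>) = coord_prob (p r) \<psi>"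
  by (simp add: coord_prob_def perm_cmat_mult_vec)

lemma coord_prob_phase_cmat:
  assumes "cmod c = 1"
  shows "coord_prob r (phase_cmat a c *v \<psi>) = coord_prob r \<psi>"
proof -
  have "cnj c * c = 1"
    using complex_norm_square[of c] assms by (simp add: mult.commute)
  then show ?thesis
    by (simp add: coord_prob_def phase_cmat_mult_vec algebra_simps)
qed

lemma coord_prob_hadamard_cmat:
  fixes a b :: "'n::finite"
  assumes "a \<noteq> b"
  shows "coord_prob a (hadamard_cmat a b *v \<psi>) * coord_prob b (hadamard_cmat a b *v \<psi>) =
      (coord_prob a \<psi> ^ 2 + coord_prob b \<psi> ^ 2 - (\<psi>$a)^2 * cnj (\<psi>$b)^2 - (\<psi>$b)^2 * cnj (\<psi>$a)^2) / 4"
    and "coord_prob a (hadamard_cmat a b *v \<psi>) + coord_prob b (hadamard_cmat a b *v \<psi>) =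
      coord_prob a \<psi> + coord_prob b \<psi>"
    and "r \<noteq> a \<Longrightarrow> r \<noteq> b \<Longrightarrow> coord_prob r (hadamard_cmat a b *v \<psi>) = coord_prob r \<psi>"
proof -
  have s: "of_real (sqrt 2) * of_real (sqrt 2) = (2::complex)"
    by (simp flip: of_real_mult)
  show "coord_prob a (hadamard_cmat a b *v \<psi>) * coord_prob b (hadamard_cmat a b *v \<psi>) =
      (coord_prob a \<psi> ^ 2 + coord_prob b \<psi> ^ 2 - (\<psi>$a)^2 * cnj (\<psi>$b)^2 - (\<psi>$b)^2 * cnj (\<psi>$a)^2) / 4"
    using assms by (simp add: hadamard_cmat_mult_vec coord_prob_def field_simps power2_eq_square s)
  show "coord_prob a (hadamard_cmat a b *v \<psi>) + coord_prob b (hadamard_cmat a b *v \<psi>) =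
      coord_prob a \<psi> + coord_prob b \<psi>"
    using assms by (simp add: hadamard_cmat_mult_vec coord_prob_def field_simps s)
  show "r \<noteq> a \<Longrightarrow> r \<noteq> b \<Longrightarrow> coord_prob r (hadamard_cmat a b *v \<psi>) = coord_prob r \<psi>"
    using assms by (simp add: hadamard_cmat_mult_vec coord_prob_def)
qed

lemma coord_prob_hadamard_cmat_sq:
  fixes a b :: "'n::finite"
  assumes "a \<noteq> b"
  shows "(coord_prob a (hadamard_cmat a b *v \<psi>) * coord_prob b (hadamard_cmat a b *v \<psi>)) ^ 2 =
    (coord_prob a \<psi> ^ 4 + coord_prob b \<psi> ^ 4 + 4 * (coord_prob a \<psi> ^ 2 * coord_prob b \<psi> ^ 2)
      + ((\<psi>$a)^2 * cnj (\<psi>$b)^2) ^ 2 + ((\<psi>$b)^2 * cnj (\<psi>$a)^2) ^ 2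
      - 2 * ((coord_prob a \<psi> ^ 2 + coord_prob b \<psi> ^ 2) * ((\<psi>$a)^2 * cnj (\<psi>$b)^2))
      - 2 * ((coord_prob a \<psi> ^ 2 + coord_prob b \<psi> ^ 2) * ((\<psi>$b)^2 * cnj (\<psi>$a)^2))) / 16"
proof -
  have square: "((p^2 + q^2 - z - w) / 4)^2 = (p^4 + q^4 + 4 * (p^2 * q^2) + z^2 + w^2
      - 2 * ((p^2 + q^2) * z) - 2 * ((p^2 + q^2) * w)) / 16"
    if "z * w = p^2 * q^2" for p q z w :: complex
  proof -
    have "((p^2 + q^2 - z - w) / 4)^2 = ((p^2 + q^2)^2 - 2 * ((p^2 + q^2) * z) - 2 * ((p^2 + q^2) * w)
        + z^2 + w^2 + 2 * (z * w)) / 16"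
      by (simp add: power2_eq_square field_simps)
    from this[unfolded that] show ?thesis
      by (simp add: power2_eq_square power4_eq_xxxx algebra_simps)
  qed
  have "(\<psi>$a)^2 * cnj (\<psi>$b)^2 * ((\<psi>$b)^2 * cnj (\<psi>$a)^2) = coord_prob a \<psi> ^ 2 * coord_prob b \<psi> ^ 2"
    by (simp add: coord_prob_def power_mult_distrib mult_ac)
  then show ?thesis
    unfolding coord_prob_hadamard_cmat(1)[OF assms] by (rule square)
qed

definition monomial :: "'n list \<Rightarrow> 'n list \<Rightarrow> complex^'n \<Rightarrow> complex" where
  "monomial I J \<psi> = (\<Prod>i\<leftarrow>I. cnj (\<psi>$i)) * (\<Prod>j\<leftarrow>J. \<psi>$j)"

lemma continuous_on_monomial [continuous_intros]: "continuous_on S (monomial I J)"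
proof -
  have "continuous_on S (\<lambda>\<psi>. \<Prod>i\<leftarrow>K. cnj (\<psi>$i))" "continuous_on S (\<lambda>\<psi>. \<Prod>i\<leftarrow>K. \<psi>$i)" for K
    by (induction K) (auto intro!: continuous_intros)
  then show ?thesis
    unfolding monomial_def by (intro continuous_on_mult)
qed

lemma monomial_phase_cmat:
  "monomial I J (phase_cmat a c *v \<psi>) = cnj c ^ count (mset I) a * c ^ count (mset J) a * monomial I J \<psi>"
proof -
  have "(\<Prod>i\<leftarrow>K. f ((phase_cmat a c *v \<psi>)$i)) = f c ^ count (mset K) a * (\<Prod>i\<leftarrow>K. f (\<psi>$i))"
    if "\<And>x y. f (x * y) = f x * f y" for K and f :: "complex \<Rightarrow> complex"
    by (induction K) (auto simp: phase_cmat_mult_vec that)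
  from this[of cnj] this[of "\<lambda>x. x"] show ?thesis
    by (simp add: monomial_def mult_ac)
qed

lemma monomial_eq_prod_coord_prob:
  fixes I J :: "'n::finite list"
  assumes "mset I = mset J"
  shows "monomial I J = (\<lambda>\<psi>. \<Prod>r\<leftarrow>I. coord_prob r \<psi>)"
proof
  fix \<psi> :: "complex^'n"
  have "(\<Prod>j\<leftarrow>J. \<psi>$j) = (\<Prod>j\<leftarrow>I. \<psi>$j)"
    by (metis assms mset_map prod_mset_prod_list)
  moreover have "(\<Prod>i\<leftarrow>K. cnj (\<psi>$i)) * (\<Prod>i\<leftarrow>K. \<psi>$i) = (\<Prod>r\<leftarrow>K. coord_prob r \<psi>)" for K
    by (induction K) (simp_all add: coord_prob_def mult_ac)
  ultimately show "monomial I J \<psi> = (\<Prod>r\<leftarrow>I. coord_prob r \<psi>)"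
    by (simp add: monomial_def)
qed

lemma cis_root_of_unity_pow_neq_1:
  fixes p q m :: nat
  assumes "p \<noteq> q" "p < m" "q < m"
  shows "cnj (cis (2 * pi / m)) ^ p * cis (2 * pi / m) ^ q \<noteq> 1"
proof
  assume one: "cnj (cis (2 * pi / m)) ^ p * cis (2 * pi / m) ^ q = 1"
  define k :: int where "k = int q - int p"
  have "cnj (cis (2 * pi / m)) ^ p * cis (2 * pi / m) ^ q
      = cis (- (real p * (2 * pi / m))) * cis (real q * (2 * pi / m))"
    unfolding cis_cnj Complex.DeMoivre by simp
  also have "\<dots> = cis (2 * pi * k / m)"
    by (simp add: k_def cis_mult diff_divide_distrib algebra_simps)
  finally have "cos (2 * pi * k / m) = 1"
    using one by (simp add: complex_eq_iff)
  then obtain n :: int where "2 * pi * k / m = 2 * pi * n"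
    by (auto simp: cos_one_2pi_int mult_ac)
  then have "real_of_int k = n * m"
    using assms by (auto simp: field_simps)
  then have "k = n * m"
    by (metis of_int_eq_iff of_int_mult of_int_of_nat_eq)
  moreover have "k \<noteq> 0" "\<bar>k\<bar> < m"
    using assms by (auto simp: k_def)
  ultimately have "\<bar>k\<bar> = \<bar>n\<bar> * m" "n \<noteq> 0"
    by (auto simp: abs_mult)
  then have "\<bar>k\<bar> \<ge> m"
    by (simp add: mult_le_cancel_right1 int_one_le_iff_zero_less)
  with \<open>\<bar>k\<bar> < m\<close> show False
    by simp
qed

section \<open>Matchings and trace contractions\<close>

text \<open>The number of bijections from the positions of \<open>I\<close> onto the elements of \<open>N\<close> (counted
  with multiplicity) that preserve the labels; for \<open>N = mset I\<close> it is the product of the factorials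
  of the multiplicities.\<close>
fun matching_count :: "'a list \<Rightarrow> 'a multiset \<Rightarrow> nat" where
  "matching_count [] N = (if N = {#} then 1 else 0)"
| "matching_count (i # I) N = count N i * matching_count I (N - {#i#})"

lemma matching_count_eq_0: "mset I \<noteq> N \<Longrightarrow> matching_count I N = 0"
proof (induction I arbitrary: N)
  case (Cons i I)
  show ?case
  proof (cases "i \<in># N")
    case True
    then have "mset I \<noteq> N - {#i#}"
      using Cons.prems by (metis insert_DiffM mset.simps(2))
    then show ?thesis
      by (simp add: Cons.IH)
  qed (simp add: count_eq_zero_iff)
qed simp

lemma sum_nth_eq_count: "(\<Sum>p<length J. if J ! p = i then c else 0) = count (mset J) i * (c::nat)"
  by (induction J) (simp_all add: sum.lessThan_Suc_shift del: sum.lessThan_Suc)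

lemma matching_count_Cons_mset:
  "matching_count (i # I) (mset (j # J)) =
     (if i = j then matching_count I (mset J) else 0)
     + (\<Sum>p<length J. if J ! p = i then matching_count I (mset (J[p := j])) else 0)"
proof -
  have "(\<Sum>p<length J. if J ! p = i then matching_count I (mset (J[p := j])) else 0)
      = (\<Sum>p<length J. if J ! p = i then matching_count I (mset (j # J) - {#i#}) else 0)"
    by (intro sum.cong) (auto simp: mset_update)
  then show ?thesis
    by (simp add: sum_nth_eq_count algebra_simps)
qed

lemma sum_lists_length_Suc:
  fixes f :: "'a::finite list \<Rightarrow> 'b::comm_monoid_add"
  shows "(\<Sum>xs | length xs = Suc k. f xs) = (\<Sum>x\<in>UNIV. \<Sum>xs | length xs = k. f (x # xs))"
proof -
  have "{xs :: 'a list. length xs = Suc k} = (\<lambda>(x, xs). x # xs) ` (UNIV \<times> {xs. length xs = k})"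
    by (auto simp: length_Suc_conv)
  moreover have "inj_on (\<lambda>(x, xs). x # xs) (UNIV \<times> {xs :: 'a list. length xs = k})"
    by (auto simp: inj_on_def)
  ultimately show ?thesis
    by (simp add: sum.reindex sum.cartesian_product case_prod_unfold)
qed

lemma sum_lists_swap_nth:
  fixes f :: "'a::finite \<Rightarrow> 'a list \<Rightarrow> 'b::comm_monoid_add"
  assumes "p < k"
  shows "(\<Sum>j\<in>UNIV. \<Sum>J | length J = k. f j J) = (\<Sum>x\<in>UNIV. \<Sum>K | length K = k. f (K ! p) (K[p := x]))"
proof -
  let ?g = "\<lambda>(x, K). (K ! p, K[p := x])"
  have "(\<Sum>(j, J)\<in>UNIV \<times> {J. length J = k}. f j J) = (\<Sum>(x, K)\<in>UNIV \<times> {K. length K = k}. f (K ! p) (K[p := x]))"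
    by (rule sum.reindex_bij_witness[of _ ?g ?g]) (use assms in auto)
  then show ?thesis
    by (simp add: sum.cartesian_product)
qed

lemma sum_rotate3: "(\<Sum>a\<in>A. \<Sum>b\<in>B. \<Sum>c\<in>C. f a b c) = (\<Sum>b\<in>B. \<Sum>c\<in>C. \<Sum>a\<in>A. f a b c)"
  by (subst sum.swap) (intro sum.cong refl sum.swap)

fun entry_prod :: "('a::comm_semiring_1^'n^'n) list \<Rightarrow> 'n list \<Rightarrow> 'n list \<Rightarrow> 'a" where
  "entry_prod (A # As) (i # I) (j # J) = A $ i $ j * entry_prod As I J"
| "entry_prod _ _ _ = 1"

lemma sum_entry_prod_update:
  "p < length As \<Longrightarrow> length I = length As \<Longrightarrow> length K = length As \<Longrightarrow>
   (\<Sum>x\<in>UNIV. entry_prod As I (K[p := x]) * A $ x $ (K ! p)) = entry_prod (As[p := As ! p ** A]) I K"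
proof (induction As arbitrary: p I K)
  case (Cons B Bs)
  then obtain i I' k K' where IK: "I = i # I'" "K = k # K'"
    by (metis length_Suc_conv)
  show ?case
  proof (cases p)
    case 0
    then show ?thesis
      by (simp add: IK matrix_matrix_mult_def sum_distrib_left sum_distrib_right mult_ac)
  next
    case (Suc q)
    then show ?thesis
      using Cons.IH[of q I' K'] Cons.prems by (simp add: IK mult_ac flip: sum_distrib_left)
  qed
qed simp

lemma sum_entry_prod_update_mult:
  fixes A :: "'a::comm_semiring_1^'n::finite^'n"
  assumes p: "p < length As" and I: "length I = length As"
  shows "(\<Sum>j\<in>UNIV. \<Sum>J | length J = length As. A $ (J ! p) $ j * entry_prod As I J * f (J[p := j]))
    = (\<Sum>K | length K = length As. entry_prod (As[p := As ! p ** A]) I K * f K)"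
proof -
  let ?L = "{K :: 'n list. length K = length As}"
  have "(\<Sum>j\<in>UNIV. \<Sum>J\<in>?L. A $ (J ! p) $ j * entry_prod As I J * f (J[p := j]))
      = (\<Sum>x\<in>UNIV. \<Sum>K\<in>?L. A $ (K[p := x] ! p) $ (K ! p) * entry_prod As I (K[p := x])
          * f ((K[p := x])[p := K ! p]))"
    by (subst sum_lists_swap_nth[OF p]) (rule refl)
  also have "\<dots> = (\<Sum>x\<in>UNIV. \<Sum>K\<in>?L. A $ x $ (K ! p) * entry_prod As I (K[p := x]) * f K)"
    using p by (intro sum.cong refl) simp
  also have "\<dots> = (\<Sum>K\<in>?L. \<Sum>x\<in>UNIV. A $ x $ (K ! p) * entry_prod As I (K[p := x]) * f K)"
    by (rule sum.swap)
  also have "\<dots> = (\<Sum>K\<in>?L. entry_prod (As[p := As ! p ** A]) I K * f K)"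
  proof (rule sum.cong[OF refl])
    fix K assume "K \<in> ?L"
    then show "(\<Sum>x\<in>UNIV. A $ x $ (K ! p) * entry_prod As I (K[p := x]) * f K) =
        entry_prod (As[p := As ! p ** A]) I K * f K"
      using p I sum_entry_prod_update[of p As I K A]
      by (simp add: mult_ac flip: sum_distrib_left sum_distrib_right)
  qed
  finally show ?thesis .
qed

lemma sum_entry_prod_off_diagonal:
  fixes A :: "'a::comm_semiring_1^'n::finite^'n"
  assumes "length I = length As"
  shows "(\<Sum>i\<in>UNIV. \<Sum>j\<in>UNIV. \<Sum>J | length J = length As. A $ i $ j * entry_prod As I J
      * (\<Sum>p<length As. if J ! p = i then f (J[p := j]) else 0))
    = (\<Sum>p<length As. \<Sum>K | length K = length As. entry_prod (As[p := As ! p ** A]) I K * f K)"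
proof -
  let ?L = "{K :: 'n list. length K = length As}"
  have inner: "(\<Sum>i\<in>UNIV. A $ i $ j * entry_prod As I J * (\<Sum>p<length As. if J ! p = i then f (J[p := j]) else 0))
      = (\<Sum>p<length As. A $ (J ! p) $ j * entry_prod As I J * f (J[p := j]))" for j J
  proof -
    have "(\<Sum>i\<in>UNIV. A $ i $ j * entry_prod As I J * (\<Sum>p<length As. if J ! p = i then f (J[p := j]) else 0))
        = (\<Sum>i\<in>UNIV. \<Sum>p<length As. if J ! p = i then A $ i $ j * entry_prod As I J * f (J[p := j]) else 0)"
      by (simp add: sum_distrib_left if_distrib[of "\<lambda>x. _ * x"] cong: if_cong)
    also have "\<dots> = (\<Sum>p<length As. \<Sum>i\<in>UNIV. if J ! p = i then A $ i $ j * entry_prod As I J * f (J[p := j]) else 0)"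
      by (rule sum.swap)
    finally show ?thesis
      by simp
  qed
  have "(\<Sum>i\<in>UNIV. \<Sum>j\<in>UNIV. \<Sum>J\<in>?L. A $ i $ j * entry_prod As I J
      * (\<Sum>p<length As. if J ! p = i then f (J[p := j]) else 0))
    = (\<Sum>j\<in>UNIV. \<Sum>J\<in>?L. \<Sum>i\<in>UNIV. A $ i $ j * entry_prod As I J
      * (\<Sum>p<length As. if J ! p = i then f (J[p := j]) else 0))"
    by (rule sum_rotate3)
  also have "\<dots> = (\<Sum>j\<in>UNIV. \<Sum>J\<in>?L. \<Sum>p<length As. A $ (J ! p) $ j * entry_prod As I J * f (J[p := j]))"
    by (simp only: inner)
  also have "\<dots> = (\<Sum>p<length As. \<Sum>j\<in>UNIV. \<Sum>J\<in>?L. A $ (J ! p) $ j * entry_prod As I J * f (J[p := j]))"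
    by (rule sum_rotate3[symmetric])
  also have "\<dots> = (\<Sum>p<length As. \<Sum>K\<in>?L. entry_prod (As[p := As ! p ** A]) I K * f K)"
    using assms by (intro sum.cong refl sum_entry_prod_update_mult) auto
  finally show ?thesis .
qed

text \<open>\<open>wick_contraction As\<close> is the sum, over the permutations \<open>\<sigma>\<close> of the factors, of the products
  over the cycles of \<open>\<sigma>\<close> of the traces of the matrix products along the cycles;
  \<open>wick_contraction_Cons\<close> unfolds it one factor at a time.\<close>
definition wick_contraction :: "('a::comm_semiring_1^'n^'n) list \<Rightarrow> 'a" where
  "wick_contraction As = (\<Sum>I | length I = length As. \<Sum>J | length J = length As.
     entry_prod As I J * of_nat (matching_count I (mset J)))"

lemma wick_contraction_Nil: "wick_contraction [] = 1"
  by (simp add: wick_contraction_def)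

lemma wick_contraction_Cons:
  fixes A :: "'a::comm_semiring_1^'n::finite^'n"
  shows "wick_contraction (A # As) =
    trace A * wick_contraction As + (\<Sum>p<length As. wick_contraction (As[p := As ! p ** A]))"
proof -
  define L where "L = {xs :: 'n list. length xs = length As}"
  define mc where "mc I J = (of_nat (matching_count I (mset J)) :: 'a)" for I J :: "'n list"
  have split: "mc (i # I) (j # J) =
      (if i = j then mc I J else 0) + (\<Sum>p<length As. if J ! p = i then mc I (J[p := j]) else 0)"
    if "J \<in> L" for i j I J
    using that unfolding mc_def matching_count_Cons_mset
    by (simp add: L_def of_nat_sum if_distrib[of of_nat] cong: if_cong)
  have diagonal: "(\<Sum>i\<in>UNIV. \<Sum>j\<in>UNIV. \<Sum>J\<in>L. A $ i $ j * entry_prod As I J * (if i = j then mc I J else 0))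
      = trace A * (\<Sum>J\<in>L. entry_prod As I J * mc I J)" for I
  proof -
    have "(\<Sum>i\<in>UNIV. \<Sum>j\<in>UNIV. \<Sum>J\<in>L. A $ i $ j * entry_prod As I J * (if i = j then mc I J else 0))
        = (\<Sum>i\<in>UNIV. \<Sum>J\<in>L. \<Sum>j\<in>UNIV. A $ i $ j * entry_prod As I J * (if i = j then mc I J else 0))"
      by (intro sum.cong refl sum.swap)
    also have "\<dots> = trace A * (\<Sum>J\<in>L. entry_prod As I J * mc I J)"
      by (simp add: trace_def sum_distrib_left sum_distrib_right mult_ac if_distrib[of "\<lambda>x. _ * x"] cong: if_cong)
        (rule sum.swap)
    finally show ?thesis .
  qed
  have "wick_contraction (A # As) = (\<Sum>i\<in>UNIV. \<Sum>I\<in>L. \<Sum>j\<in>UNIV. \<Sum>J\<in>L.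
      A $ i $ j * entry_prod As I J * mc (i # I) (j # J))"
    by (simp add: wick_contraction_def sum_lists_length_Suc L_def mc_def mult.assoc)
  also have "\<dots> = (\<Sum>I\<in>L. \<Sum>i\<in>UNIV. \<Sum>j\<in>UNIV. \<Sum>J\<in>L.
      A $ i $ j * entry_prod As I J * mc (i # I) (j # J))"
    by (rule sum.swap)
  also have "\<dots> = (\<Sum>I\<in>L. trace A * (\<Sum>J\<in>L. entry_prod As I J * mc I J)
      + (\<Sum>p<length As. \<Sum>K\<in>L. entry_prod (As[p := As ! p ** A]) I K * mc I K))"
  proof (rule sum.cong[OF refl])
    fix I assume "I \<in> L"
    then have "length I = length As"
      by (simp add: L_def)
    then show "(\<Sum>i\<in>UNIV. \<Sum>j\<in>UNIV. \<Sum>J\<in>L. A $ i $ j * entry_prod As I J * mc (i # I) (j # J))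
      = trace A * (\<Sum>J\<in>L. entry_prod As I J * mc I J)
        + (\<Sum>p<length As. \<Sum>K\<in>L. entry_prod (As[p := As ! p ** A]) I K * mc I K)"
      using diagonal[of I] sum_entry_prod_off_diagonal[where I = I and As = As and A = A and f = "mc I", folded L_def]
      by (simp add: split distrib_left sum.distrib cong: sum.cong)
  qed
  also have "\<dots> = trace A * wick_contraction As + (\<Sum>p<length As. wick_contraction (As[p := As ! p ** A]))"
    by (simp add: wick_contraction_def L_def mc_def sum.distrib sum_distrib_left sum.swap[of _ "{..<length As}"])
  finally show ?thesis .
qed

lemma trace_cmat_adj: "trace (cmat_adj A) = cnj (trace A)"
  by (simp add: trace_def cmat_adj_def)

lemma trace_cmat_adj_mult: "trace (cmat_adj A ** cmat_adj B) = cnj (trace (B ** A))"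
  by (simp add: trace_def cmat_adj_def matrix_matrix_mult_def mult.commute)

lemma wick_contraction_unitary:
  fixes X :: "complex^'n::finite^'n"
  assumes "unitary_cmat X"
  defines "t \<equiv> trace X" and "s \<equiv> trace (X ** X)" and "d \<equiv> of_nat CARD('n) :: complex"
  shows "wick_contraction [X, cmat_adj X] = d + t * cnj t"
    and "wick_contraction [X, cmat_adj X, X, cmat_adj X] =
      2 * d * (d + 3) + 4 * (d + 2) * (t * cnj t) + s * cnj s + (t * cnj t)^2 + (s * cnj t ^ 2 + cnj s * t ^ 2)"
proof -
  have U: "X ** cmat_adj X = mat 1" "cmat_adj X ** X = mat 1"
    using assms(1) by (simp_all add: unitary_cmat_def)
  have U': "X ** (cmat_adj X ** Y) = Y" "cmat_adj X ** (X ** Y) = Y" for Y :: "complex^'n^'n"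
    by (simp_all add: matrix_mul_assoc U)
  note simps = wick_contraction_Cons wick_contraction_Nil matrix_mul_assoc[symmetric] U U'
    matrix_mul_lid matrix_mul_rid trace_I trace_cmat_adj trace_cmat_adj_mult t_def s_def d_def
  show "wick_contraction [X, cmat_adj X] = d + t * cnj t"
    by (simp add: simps)
  show "wick_contraction [X, cmat_adj X, X, cmat_adj X] =
      2 * d * (d + 3) + 4 * (d + 2) * (t * cnj t) + s * cnj s + (t * cnj t)^2 + (s * cnj t ^ 2 + cnj s * t ^ 2)"
    by (simp add: simps eval_nat_numeral algebra_simps power2_eq_square)
qed

lemma cnj_braket: "cnj (braket \<psi> A) = braket \<psi> (cmat_adj A)"
  by (simp add: braket_def matrix_vector_mult_def cmat_adj_def sum_distrib_left mult_ac)
    (rule sum.swap)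

lemma prod_braket_eq_sum_monomial:
  fixes \<psi> :: "complex^'n::finite"
  shows "(\<Prod>A\<leftarrow>As. braket \<psi> A) =
    (\<Sum>I | length I = length As. \<Sum>J | length J = length As. entry_prod As I J * monomial I J \<psi>)"
proof (induction As)
  case (Cons A As)
  define L where "L = {xs :: 'n list. length xs = length As}"
  have "braket \<psi> A = (\<Sum>i\<in>UNIV. \<Sum>j\<in>UNIV. A $ i $ j * (cnj (\<psi>$i) * \<psi>$j))"
    by (simp add: braket_def matrix_vector_mult_def sum_distrib_left mult_ac)
  then have "(\<Prod>B\<leftarrow>A # As. braket \<psi> B) =
      (\<Sum>i\<in>UNIV. \<Sum>I\<in>L. \<Sum>j\<in>UNIV. \<Sum>J\<in>L.
        A $ i $ j * (cnj (\<psi>$i) * \<psi>$j) * (entry_prod As I J * monomial I J \<psi>))"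
    by (simp only: prod_list.Cons list.map Cons L_def sum_product)
  also have "\<dots> = (\<Sum>i\<in>UNIV. \<Sum>I\<in>L. \<Sum>j\<in>UNIV. \<Sum>J\<in>L.
        entry_prod (A # As) (i # I) (j # J) * monomial (i # I) (j # J) \<psi>)"
    by (simp add: monomial_def mult_ac)
  finally show ?case
    by (simp add: L_def sum_lists_length_Suc)
qed (simp add: monomial_def)

lemma of_real_cmod_power:
  shows "complex_of_real (cmod z) ^ 2 = z * cnj z"
    and "complex_of_real (cmod z) ^ 4 = (z * cnj z) ^ 2"
proof -
  show sq: "complex_of_real (cmod z) ^ 2 = z * cnj z"
    using complex_norm_square[of z] by simp
  have "complex_of_real (cmod z) ^ 4 = (complex_of_real (cmod z) ^ 2) ^ 2"
    by (simp flip: power_mult)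
  then show "complex_of_real (cmod z) ^ 4 = (z * cnj z) ^ 2"
    by (simp only: sq)
qed

lemma of_real_Re: "complex_of_real (Re z) = (z + cnj z) / 2"
  by (simp add: complex_eq_iff)

lemma pochhammer_of_nat_card_neq_0: "pochhammer (of_nat CARD('n::finite)) k \<noteq> (0::complex)"
proof
  assume "pochhammer (of_nat CARD('n)) k = (0::complex)"
  then obtain j where "(of_nat CARD('n) :: complex) = - of_nat j"
    by (auto simp: pochhammer_eq_0_iff)
  then have "(of_nat (CARD('n) + j) :: complex) = 0"
    by (simp add: algebra_simps)
  then show False
    by (simp only: of_nat_eq_0_iff) simp
qed

section \<open>Unitarily invariant state measures\<close>

locale haar_state =
  fixes M :: "(complex^'n) measure"
  assumes haar_state_measure: "haar_state_measure M"
begin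

sublocale prob_space M
  using haar_state_measure by (simp add: haar_state_measure_def)

abbreviation expect :: "(complex^'n \<Rightarrow> complex) \<Rightarrow> complex" where
  "expect f \<equiv> integral\<^sup>L M f"

lemma sets_eq_borel: "sets M = sets borel"
  and AE_norm_eq_1: "AE \<psi> in M. norm \<psi> = 1"
  and distr_unitary: "unitary_cmat U \<Longrightarrow> distr M borel ((*v) U) = M"
  using haar_state_measure by (auto simp: haar_state_measure_def)

lemma borel_measurable_continuous:
  "continuous_on UNIV f \<Longrightarrow> f \<in> borel_measurable M"
  unfolding measurable_cong_sets[OF sets_eq_borel refl] by (rule borel_measurable_continuous_onI)

lemma integrable_continuous:
  fixes f :: "complex^'n \<Rightarrow> 'b::{banach, second_countable_topology}"
  assumes f: "continuous_on UNIV f"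
  shows "integrable M f"
proof -
  have "compact (f ` sphere 0 1)"
    by (rule compact_continuous_image[OF continuous_on_subset[OF f] compact_sphere]) auto
  then obtain B where B: "\<And>x. x \<in> f ` sphere 0 1 \<Longrightarrow> norm x \<le> B"
    by (meson bounded_iff compact_imp_bounded)
  have "AE \<psi> in M. norm (f \<psi>) \<le> B"
    using AE_norm_eq_1 by eventually_elim (rule B, simp)
  then show ?thesis
    by (rule integrable_const_bound) (rule borel_measurable_continuous[OF f])
qed

lemma expect_sum:
  "(\<And>x. x \<in> A \<Longrightarrow> continuous_on UNIV (f x)) \<Longrightarrow>
      expect (\<lambda>\<psi>. \<Sum>x\<in>A. f x \<psi>) = (\<Sum>x\<in>A. expect (f x))"
  by (intro Bochner_Integration.integral_sum integrable_continuous)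

lemma expect_unitary_invariant:
  assumes U: "unitary_cmat U" and f: "continuous_on UNIV f"
  shows "expect (\<lambda>\<psi>. f (U *v \<psi>)) = expect f"
proof -
  have "(*v) U \<in> measurable M borel"
    by (intro borel_measurable_continuous linear_continuous_on
        linear_conv_bounded_linear[THEN iffD1] matrix_vector_mul_linear)
  then have "expect (\<lambda>\<psi>. f (U *v \<psi>)) = integral\<^sup>L (distr M borel ((*v) U)) f"
    by (rule integral_distr[symmetric]) (rule borel_measurable_continuous_onI[OF f])
  also have "\<dots> = expect f"
    unfolding distr_unitary[OF U] ..
  finally show ?thesis .
qed

lemma expect_eq_0_if_unitary_scaled:
  assumes "unitary_cmat U" "continuous_on UNIV f"
    and "\<And>\<psi>. f (U *v \<psi>) = w * f \<psi>" "w \<noteq> 1"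
  shows "expect f = 0"
proof -
  have "expect f = w * expect f"
    using expect_unitary_invariant[OF assms(1,2)] by (simp add: assms(3))
  then have "(1 - w) * expect f = 0"
    by (simp add: algebra_simps)
  then show ?thesis
    using assms(4) by simp
qed

lemma expect_monomial_unbalanced:
  assumes "mset I \<noteq> mset J"
  shows "expect (monomial I J) = 0"
proof -
  obtain a where a: "count (mset I) a \<noteq> count (mset J) a"
    using assms by (meson multiset_eqI)
  define m where "m = length I + length J + 1"
  define c where "c = cis (2 * pi / m)"
  show ?thesis
  proof (rule expect_eq_0_if_unitary_scaled[OF unitary_phase_cmat[of c a]])
    show "monomial I J (phase_cmat a c *v \<psi>) = cnj c ^ count (mset I) a * c ^ count (mset J) a * monomial I J \<psi>"
      for \<psi>
      by (rule monomial_phase_cmat)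
    have "count (mset I) a < m" "count (mset J) a < m"
      using count_le_size[of "mset I" a] count_le_size[of "mset J" a] by (simp_all add: m_def)
    with a show "cnj c ^ count (mset I) a * c ^ count (mset J) a \<noteq> 1"
      unfolding c_def by (rule cis_root_of_unity_pow_neq_1)
  qed (simp_all add: c_def continuous_on_monomial)
qed

lemma expect_cross_term_eq_0:
  assumes ab: "a \<noteq> b" and q: "continuous_on UNIV q"
    and qD: "\<And>\<psi>. q (phase_cmat a \<i> *v \<psi>) = q \<psi>"
  shows "expect (\<lambda>\<psi>. q \<psi> * ((\<psi>$a)^2 * cnj (\<psi>$b)^2)) = 0"
proof (rule expect_eq_0_if_unitary_scaled[OF unitary_phase_cmat[of \<i> a]])
  show "(\<lambda>\<psi>. q \<psi> * ((\<psi>$a)^2 * cnj (\<psi>$b)^2)) (phase_cmat a \<i> *v \<psi>) =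
      - 1 * (q \<psi> * ((\<psi>$a)^2 * cnj (\<psi>$b)^2))" for \<psi>
    using ab by (simp add: qD[unfolded phase_cmat_mult_vec] phase_cmat_mult_vec power_mult_distrib)
qed (auto intro!: continuous_intros q)

section \<open>Moments of coordinate probabilities\<close>

lemma expect_sum_coord_prob:
  assumes "continuous_on UNIV f"
  shows "(\<Sum>r\<in>UNIV. expect (\<lambda>\<psi>. f \<psi> * coord_prob r \<psi>)) = expect f"
proof -
  have "(\<Sum>r\<in>UNIV. expect (\<lambda>\<psi>. f \<psi> * coord_prob r \<psi>)) = expect (\<lambda>\<psi>. f \<psi> * (\<Sum>r\<in>UNIV. coord_prob r \<psi>))"
    unfolding sum_distrib_left by (rule expect_sum[symmetric]) (intro continuous_intros assms)
  also have "\<dots> = expect f"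
    using AE_norm_eq_1 by (intro integral_cong_AE borel_measurable_continuous continuous_intros assms)
      (auto simp: sum_coord_prob)
  finally show ?thesis .
qed

lemma expect_sum_coord_prob_split:
  assumes f: "continuous_on UNIV f"
    and k: "\<And>r. a \<noteq> r \<Longrightarrow> expect (\<lambda>\<psi>. f \<psi> * coord_prob r \<psi>) = k"
  shows "expect (\<lambda>\<psi>. f \<psi> * coord_prob a \<psi>) + (of_nat CARD('n) - 1) * k = expect f"
proof -
  have "(\<Sum>r\<in>UNIV - {a}. expect (\<lambda>\<psi>. f \<psi> * coord_prob r \<psi>)) = (of_nat CARD('n) - 1) * k"
    using k by (simp add: card_Diff_singleton of_nat_diff)
  then show ?thesis
    using expect_sum_coord_prob[OF f] by (simp add: sum.remove[of UNIV a])
qed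

lemma expect_coord_prob_pow_swap:
  "expect (\<lambda>\<psi>. coord_prob a \<psi> ^ m * coord_prob b \<psi> ^ n) =
   expect (\<lambda>\<psi>. coord_prob b \<psi> ^ m * coord_prob a \<psi> ^ n)"
  using expect_unitary_invariant[OF unitary_perm_cmat[of "Transposition.transpose a b"],
      of "\<lambda>\<psi>. coord_prob a \<psi> ^ m * coord_prob b \<psi> ^ n"]
  by (simp add: coord_prob_perm_cmat continuous_intros)

lemma expect_hadamard_pair:
  assumes ab: "a \<noteq> b" and q: "continuous_on UNIV q"
    and qH: "\<And>\<psi>. q (hadamard_cmat a b *v \<psi>) = q \<psi>"
    and qD: "\<And>r \<psi>. q (phase_cmat r \<i> *v \<psi>) = q \<psi>"
  shows "expect (\<lambda>\<psi>. coord_prob a \<psi> * coord_prob b \<psi> * q \<psi>) =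
    (expect (\<lambda>\<psi>. coord_prob a \<psi> ^ 2 * q \<psi>) + expect (\<lambda>\<psi>. coord_prob b \<psi> ^ 2 * q \<psi>)) / 4"
proof -
  have "expect (\<lambda>\<psi>. coord_prob a \<psi> * coord_prob b \<psi> * q \<psi>) =
      expect (\<lambda>\<psi>. coord_prob a (hadamard_cmat a b *v \<psi>) * coord_prob b (hadamard_cmat a b *v \<psi>)
        * q (hadamard_cmat a b *v \<psi>))"
    by (rule expect_unitary_invariant[OF unitary_hadamard_cmat[OF ab], symmetric]) (intro continuous_intros q)
  also have "\<dots> = expect (\<lambda>\<psi>. (coord_prob a \<psi> ^ 2 * q \<psi> + coord_prob b \<psi> ^ 2 * q \<psi>
      - q \<psi> * ((\<psi>$a)^2 * cnj (\<psi>$b)^2) - q \<psi> * ((\<psi>$b)^2 * cnj (\<psi>$a)^2)) / 4)"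
    by (rule arg_cong[where f = expect]) (simp add: fun_eq_iff qH coord_prob_hadamard_cmat(1)[OF ab] field_simps)
  also have "\<dots> = (expect (\<lambda>\<psi>. coord_prob a \<psi> ^ 2 * q \<psi>) + expect (\<lambda>\<psi>. coord_prob b \<psi> ^ 2 * q \<psi>)
      - expect (\<lambda>\<psi>. q \<psi> * ((\<psi>$a)^2 * cnj (\<psi>$b)^2)) - expect (\<lambda>\<psi>. q \<psi> * ((\<psi>$b)^2 * cnj (\<psi>$a)^2))) / 4"
    by (simp add: integrable_continuous continuous_intros q)
  also have "expect (\<lambda>\<psi>. q \<psi> * ((\<psi>$a)^2 * cnj (\<psi>$b)^2)) = 0"
    using ab q qD by (rule expect_cross_term_eq_0)
  also have "expect (\<lambda>\<psi>. q \<psi> * ((\<psi>$b)^2 * cnj (\<psi>$a)^2)) = 0"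
    using ab q qD by (intro expect_cross_term_eq_0) auto
  finally show ?thesis
    by simp
qed

lemma expect_hadamard_square:
  assumes ab: "a \<noteq> b"
  shows "expect (\<lambda>\<psi>. coord_prob a \<psi> ^ 2 * coord_prob b \<psi> ^ 2) =
    (expect (\<lambda>\<psi>. coord_prob a \<psi> ^ 4) + expect (\<lambda>\<psi>. coord_prob b \<psi> ^ 4)
      + 4 * expect (\<lambda>\<psi>. coord_prob a \<psi> ^ 2 * coord_prob b \<psi> ^ 2)) / 16"
proof -
  define Z where "Z x y \<psi> = (\<psi>$x)^2 * cnj (\<psi>$y)^2" for x y and \<psi> :: "complex^'n"
  have Z_cont: "continuous_on UNIV (Z x y)" for x y
    unfolding Z_def by (intro continuous_intros)
  have Z_sq: "expect (\<lambda>\<psi>. Z x y \<psi> ^ 2) = 0" if "x \<noteq> y" for x y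
  proof -
    have "(\<lambda>\<psi>. Z x y \<psi> ^ 2) = monomial [y, y, y, y] [x, x, x, x]"
      by (simp add: fun_eq_iff Z_def monomial_def power2_eq_square power_mult_distrib mult_ac)
    moreover have "mset [y, y, y, y] \<noteq> mset [x, x, x, x]"
      using that by (auto simp: multiset_eq_iff dest: spec[of _ y])
    ultimately show ?thesis
      by (simp add: expect_monomial_unbalanced)
  qed
  have Z_cross: "expect (\<lambda>\<psi>. (coord_prob a \<psi> ^ 2 + coord_prob b \<psi> ^ 2) * Z x y \<psi>) = 0"
    if "x \<noteq> y" "x \<in> {a, b}" for x y
    unfolding Z_def using that
    by (intro expect_cross_term_eq_0) (auto simp: coord_prob_phase_cmat intro!: continuous_intros)
  have "expect (\<lambda>\<psi>. coord_prob a \<psi> ^ 2 * coord_prob b \<psi> ^ 2) =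
      expect (\<lambda>\<psi>. (coord_prob a (hadamard_cmat a b *v \<psi>) * coord_prob b (hadamard_cmat a b *v \<psi>)) ^ 2)"
    unfolding power_mult_distrib
    by (rule expect_unitary_invariant[OF unitary_hadamard_cmat[OF ab], symmetric]) (intro continuous_intros)
  also have "\<dots> = expect (\<lambda>\<psi>. (coord_prob a \<psi> ^ 4 + coord_prob b \<psi> ^ 4
      + 4 * (coord_prob a \<psi> ^ 2 * coord_prob b \<psi> ^ 2) + Z a b \<psi> ^ 2 + Z b a \<psi> ^ 2
      - 2 * ((coord_prob a \<psi> ^ 2 + coord_prob b \<psi> ^ 2) * Z a b \<psi>)
      - 2 * ((coord_prob a \<psi> ^ 2 + coord_prob b \<psi> ^ 2) * Z b a \<psi>)) / 16)"
    unfolding coord_prob_hadamard_cmat_sq[OF ab] Z_def ..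
  also have "\<dots> = (expect (\<lambda>\<psi>. coord_prob a \<psi> ^ 4) + expect (\<lambda>\<psi>. coord_prob b \<psi> ^ 4)
      + 4 * expect (\<lambda>\<psi>. coord_prob a \<psi> ^ 2 * coord_prob b \<psi> ^ 2)) / 16"
    using Z_sq[OF ab] Z_sq[OF ab[symmetric]] Z_cross[of a b] Z_cross[of b a] ab
    by (simp add: integrable_continuous continuous_intros Z_cont)
  finally show ?thesis .
qed

lemma expect_coord_prob_mult_ratio:
  "a \<noteq> b \<Longrightarrow> 2 * expect (\<lambda>\<psi>. coord_prob a \<psi> * coord_prob b \<psi>) = expect (\<lambda>\<psi>. coord_prob a \<psi> ^ 2)"
  using expect_hadamard_pair[of a b "\<lambda>_. 1"] expect_coord_prob_pow_swap[of b 2 a 0]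
  by (simp add: field_simps)

lemma expect_coord_prob_sq_mult_ratio:
  assumes "a \<noteq> b"
  shows "3 * expect (\<lambda>\<psi>. coord_prob a \<psi> ^ 2 * coord_prob b \<psi>) = expect (\<lambda>\<psi>. coord_prob a \<psi> ^ 3)"
proof -
  have "expect (\<lambda>\<psi>. coord_prob a \<psi> * coord_prob b \<psi> * (coord_prob a \<psi> + coord_prob b \<psi>)) =
    (expect (\<lambda>\<psi>. coord_prob a \<psi> ^ 2 * (coord_prob a \<psi> + coord_prob b \<psi>))
      + expect (\<lambda>\<psi>. coord_prob b \<psi> ^ 2 * (coord_prob a \<psi> + coord_prob b \<psi>))) / 4"
    using assms by (intro expect_hadamard_pair)
      (auto simp: coord_prob_hadamard_cmat(2) coord_prob_phase_cmat intro!: continuous_intros)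
  moreover note expect_coord_prob_pow_swap[of b 3 a 0] expect_coord_prob_pow_swap[of b 2 a 1]
  ultimately show ?thesis
    by (simp add: distrib_left distrib_right power2_eq_square power3_eq_cube ac_simps
        integrable_continuous continuous_intros field_simps)
qed

lemma expect_coord_prob_sq_mult_sq_ratio:
  "a \<noteq> b \<Longrightarrow> 6 * expect (\<lambda>\<psi>. coord_prob a \<psi> ^ 2 * coord_prob b \<psi> ^ 2) = expect (\<lambda>\<psi>. coord_prob a \<psi> ^ 4)"
  using expect_hadamard_square[of a b] expect_coord_prob_pow_swap[of b 4 a 0]
  by (simp add: field_simps)

lemma expect_mult_add_sq:
  assumes "continuous_on UNIV f" "continuous_on UNIV g" "continuous_on UNIV h"
  shows "expect (\<lambda>\<psi>. f \<psi> * (g \<psi> + h \<psi>) ^ 2) =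
    expect (\<lambda>\<psi>. f \<psi> * g \<psi> ^ 2) + 2 * expect (\<lambda>\<psi>. f \<psi> * (g \<psi> * h \<psi>)) + expect (\<lambda>\<psi>. f \<psi> * h \<psi> ^ 2)"
proof -
  have "(\<lambda>\<psi>. f \<psi> * (g \<psi> + h \<psi>) ^ 2) = (\<lambda>\<psi>. f \<psi> * g \<psi> ^ 2 + 2 * (f \<psi> * (g \<psi> * h \<psi>)) + f \<psi> * h \<psi> ^ 2)"
    by (simp add: fun_eq_iff power2_eq_square algebra_simps)
  then show ?thesis
    using assms by (simp add: integrable_continuous continuous_intros)
qed

lemma expect_coord_prob_pow3_mult_ratio:
  assumes ab: "a \<noteq> b"
  shows "4 * expect (\<lambda>\<psi>. coord_prob a \<psi> ^ 3 * coord_prob b \<psi>) = expect (\<lambda>\<psi>. coord_prob a \<psi> ^ 4)"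
proof -
  define A where "A = expect (\<lambda>\<psi>. coord_prob a \<psi> ^ 4)"
  define C where "C = expect (\<lambda>\<psi>. coord_prob a \<psi> ^ 2 * coord_prob b \<psi> ^ 2)"
  define X where "X = expect (\<lambda>\<psi>. coord_prob a \<psi> ^ 3 * coord_prob b \<psi>)"
  have "expect (\<lambda>\<psi>. coord_prob a \<psi> * coord_prob b \<psi> * (coord_prob a \<psi> + coord_prob b \<psi>) ^ 2) =
    (expect (\<lambda>\<psi>. coord_prob a \<psi> ^ 2 * (coord_prob a \<psi> + coord_prob b \<psi>) ^ 2)
      + expect (\<lambda>\<psi>. coord_prob b \<psi> ^ 2 * (coord_prob a \<psi> + coord_prob b \<psi>) ^ 2)) / 4"
    using ab by (intro expect_hadamard_pair)
      (auto simp: coord_prob_hadamard_cmat(2) coord_prob_phase_cmat intro!: continuous_intros)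
  moreover have "expect (\<lambda>\<psi>. coord_prob a \<psi> * coord_prob b \<psi> * coord_prob a \<psi> ^ 2) = X"
    "expect (\<lambda>\<psi>. coord_prob a \<psi> * coord_prob b \<psi> * (coord_prob a \<psi> * coord_prob b \<psi>)) = C"
    "expect (\<lambda>\<psi>. coord_prob a \<psi> * coord_prob b \<psi> * coord_prob b \<psi> ^ 2) = X"
    "expect (\<lambda>\<psi>. coord_prob a \<psi> ^ 2 * coord_prob a \<psi> ^ 2) = A"
    "expect (\<lambda>\<psi>. coord_prob a \<psi> ^ 2 * (coord_prob a \<psi> * coord_prob b \<psi>)) = X"
    "expect (\<lambda>\<psi>. coord_prob b \<psi> ^ 2 * coord_prob a \<psi> ^ 2) = C"
    "expect (\<lambda>\<psi>. coord_prob b \<psi> ^ 2 * (coord_prob a \<psi> * coord_prob b \<psi>)) = X"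
    "expect (\<lambda>\<psi>. coord_prob b \<psi> ^ 2 * coord_prob b \<psi> ^ 2) = A"
    using expect_coord_prob_pow_swap[of b 4 a 0] expect_coord_prob_pow_swap[of b 3 a 1]
      expect_coord_prob_pow_swap[of b 2 a 2]
    by (simp_all add: A_def C_def X_def power2_eq_square power3_eq_cube power4_eq_xxxx ac_simps)
  ultimately have "X + 2 * C + X = (A + 2 * X + C + (C + 2 * X + A)) / 4"
    by (simp add: expect_mult_add_sq continuous_intros C_def[symmetric])
  moreover have "6 * C = A"
    unfolding A_def C_def using ab by (rule expect_coord_prob_sq_mult_sq_ratio)
  ultimately show ?thesis
    unfolding A_def[symmetric] X_def[symmetric] by (simp add: field_simps)
qed

lemma expect_coord_prob_pow_Suc:
  assumes "\<And>b. a \<noteq> b \<Longrightarrow>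
    (of_nat k + 1) * expect (\<lambda>\<psi>. coord_prob a \<psi> ^ k * coord_prob b \<psi>) = expect (\<lambda>\<psi>. coord_prob a \<psi> ^ Suc k)"
  shows "(of_nat CARD('n) + of_nat k) * expect (\<lambda>\<psi>. coord_prob a \<psi> ^ Suc k) =
    (of_nat k + 1) * expect (\<lambda>\<psi>. coord_prob a \<psi> ^ k)"
proof -
  define A where "A = expect (\<lambda>\<psi>. coord_prob a \<psi> ^ Suc k)"
  have nz: "(of_nat k + 1 :: complex) \<noteq> 0"
    by (metis of_nat_Suc of_nat_eq_0_iff add.commute nat.distinct(1))
  have "expect (\<lambda>\<psi>. coord_prob a \<psi> ^ k * coord_prob r \<psi>) = A / (of_nat k + 1)" if "a \<noteq> r" for r
    using assms[OF that] nz by (simp add: A_def eq_divide_eq mult.commute)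
  then have "expect (\<lambda>\<psi>. coord_prob a \<psi> ^ k * coord_prob a \<psi>) + (of_nat CARD('n) - 1) * (A / (of_nat k + 1))
      = expect (\<lambda>\<psi>. coord_prob a \<psi> ^ k)"
    by (intro expect_sum_coord_prob_split) (auto intro!: continuous_intros)
  moreover have "expect (\<lambda>\<psi>. coord_prob a \<psi> ^ k * coord_prob a \<psi>) = A"
    by (simp add: A_def mult.commute)
  moreover have "(of_nat k + 1) * (A + (of_nat CARD('n) - 1) * (A / (of_nat k + 1))) = (of_nat CARD('n) + of_nat k) * A"
    using nz by (simp add: field_simps)
  ultimately show ?thesis
    by (metis A_def)
qed

lemma expect_coord_prob_pow:
  assumes "k \<le> 4"
  shows "pochhammer (of_nat CARD('n)) k * expect (\<lambda>\<psi>. coord_prob a \<psi> ^ k) = fact k"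
  using assms
proof (induction k)
  case 0
  then show ?case
    by (simp add: prob_space)
next
  case (Suc k)
  have "(of_nat k + 1) * expect (\<lambda>\<psi>. coord_prob a \<psi> ^ k * coord_prob b \<psi>) = expect (\<lambda>\<psi>. coord_prob a \<psi> ^ Suc k)"
    if "a \<noteq> b" for b
  proof -
    consider "k = 0" | "k = 1" | "k = 2" | "k = 3"
      using Suc.prems by linarith
    then show ?thesis
      using that expect_coord_prob_pow_swap[of b 1 a 0] expect_coord_prob_mult_ratio[OF that]
        expect_coord_prob_sq_mult_ratio[OF that] expect_coord_prob_pow3_mult_ratio[OF that]
      by cases (simp_all add: eval_nat_numeral)
  qed
  then have "(of_nat CARD('n) + of_nat k) * expect (\<lambda>\<psi>. coord_prob a \<psi> ^ Suc k) =
      (of_nat k + 1) * expect (\<lambda>\<psi>. coord_prob a \<psi> ^ k)"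
    by (rule expect_coord_prob_pow_Suc)
  then have "pochhammer (of_nat CARD('n)) (Suc k) * expect (\<lambda>\<psi>. coord_prob a \<psi> ^ Suc k)
      = (of_nat k + 1) * (pochhammer (of_nat CARD('n)) k * expect (\<lambda>\<psi>. coord_prob a \<psi> ^ k))"
    by (simp add: pochhammer_Suc mult_ac)
  with Suc show ?case
    by (simp add: algebra_simps)
qed

lemma expect_coord_prob_sq_mult_mult:
  assumes "distinct [a, b, c]"
  shows "expect (\<lambda>\<psi>. coord_prob a \<psi> ^ 2 * coord_prob b \<psi> * coord_prob c \<psi>) =
    (expect (\<lambda>\<psi>. coord_prob a \<psi> ^ 2 * coord_prob b \<psi> ^ 2) + expect (\<lambda>\<psi>. coord_prob a \<psi> ^ 2 * coord_prob c \<psi> ^ 2)) / 4"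
  using expect_hadamard_pair[of b c "\<lambda>\<psi>. coord_prob a \<psi> ^ 2"] assms
  by (simp add: coord_prob_hadamard_cmat(3) coord_prob_phase_cmat continuous_intros mult_ac)

lemma expect_coord_prob_mult4:
  assumes "distinct [a, b, c, e]"
  shows "expect (\<lambda>\<psi>. coord_prob a \<psi> * coord_prob b \<psi> * coord_prob c \<psi> * coord_prob e \<psi>) =
    (expect (\<lambda>\<psi>. coord_prob a \<psi> ^ 2 * coord_prob c \<psi> * coord_prob e \<psi>)
      + expect (\<lambda>\<psi>. coord_prob b \<psi> ^ 2 * coord_prob c \<psi> * coord_prob e \<psi>)) / 4"
proof -
  have "c \<noteq> a" "c \<noteq> b" "e \<noteq> a" "e \<noteq> b" "a \<noteq> b"
    using assms by auto
  then show ?thesis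
    using expect_hadamard_pair[of a b "\<lambda>\<psi>. coord_prob c \<psi> * coord_prob e \<psi>"]
    by (simp add: coord_prob_hadamard_cmat(3) coord_prob_phase_cmat continuous_intros mult_ac)
qed

lemma expect_coord_prob_monomials2:
  shows "expect (\<lambda>\<psi>. coord_prob x \<psi> * coord_prob x \<psi>) = 2 / pochhammer (of_nat CARD('n)) 2"
    and "x \<noteq> y \<Longrightarrow> expect (\<lambda>\<psi>. coord_prob x \<psi> * coord_prob y \<psi>) = 1 / pochhammer (of_nat CARD('n)) 2"
proof -
  have N: "pochhammer (of_nat CARD('n)) 2 \<noteq> (0::complex)"
    by (rule pochhammer_of_nat_card_neq_0)
  show xx: "expect (\<lambda>\<psi>. coord_prob x \<psi> * coord_prob x \<psi>) = 2 / pochhammer (of_nat CARD('n)) 2"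
    using expect_coord_prob_pow[of 2 x] N by (simp add: eq_divide_eq power2_eq_square mult.commute fact_numeral)
  show "x \<noteq> y \<Longrightarrow> expect (\<lambda>\<psi>. coord_prob x \<psi> * coord_prob y \<psi>) = 1 / pochhammer (of_nat CARD('n)) 2"
    using expect_coord_prob_mult_ratio[of x y] xx N by (simp add: power2_eq_square field_simps)
qed

lemma expect_coord_prob_deg4:
  defines "N \<equiv> pochhammer (of_nat CARD('n)) 4 :: complex"
  shows "expect (\<lambda>\<psi>. coord_prob a \<psi> ^ 4) = 24 / N"
    and "a \<noteq> b \<Longrightarrow> expect (\<lambda>\<psi>. coord_prob a \<psi> ^ 3 * coord_prob b \<psi>) = 6 / N"
    and "a \<noteq> b \<Longrightarrow> expect (\<lambda>\<psi>. coord_prob a \<psi> ^ 2 * coord_prob b \<psi> ^ 2) = 4 / N"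
    and "distinct [a, b, c] \<Longrightarrow>
      expect (\<lambda>\<psi>. coord_prob a \<psi> ^ 2 * coord_prob b \<psi> * coord_prob c \<psi>) = 2 / N"
    and "distinct [a, b, c, e] \<Longrightarrow>
      expect (\<lambda>\<psi>. coord_prob a \<psi> * coord_prob b \<psi> * coord_prob c \<psi> * coord_prob e \<psi>) = 1 / N"
proof -
  have "N \<noteq> 0"
    unfolding N_def by (rule pochhammer_of_nat_card_neq_0)
  show pow4: "expect (\<lambda>\<psi>. coord_prob a \<psi> ^ 4) = 24 / N" for a
    using expect_coord_prob_pow[of 4 a] \<open>N \<noteq> 0\<close> by (simp add: N_def eq_divide_eq mult.commute fact_numeral)
  show pow31: "expect (\<lambda>\<psi>. coord_prob a \<psi> ^ 3 * coord_prob b \<psi>) = 6 / N" if "a \<noteq> b" for a b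
    using expect_coord_prob_pow3_mult_ratio[OF that] pow4[of a] \<open>N \<noteq> 0\<close> by (simp add: field_simps)
  show pow22: "expect (\<lambda>\<psi>. coord_prob a \<psi> ^ 2 * coord_prob b \<psi> ^ 2) = 4 / N" if "a \<noteq> b" for a b
    using expect_coord_prob_sq_mult_sq_ratio[OF that] pow4[of a] \<open>N \<noteq> 0\<close> by (simp add: field_simps)
  show pow211: "expect (\<lambda>\<psi>. coord_prob a \<psi> ^ 2 * coord_prob b \<psi> * coord_prob c \<psi>) = 2 / N"
    if "distinct [a, b, c]" for a b c
  proof -
    have "expect (\<lambda>\<psi>. coord_prob a \<psi> ^ 2 * coord_prob b \<psi> * coord_prob c \<psi>) =
      (expect (\<lambda>\<psi>. coord_prob a \<psi> ^ 2 * coord_prob b \<psi> ^ 2) + expect (\<lambda>\<psi>. coord_prob a \<psi> ^ 2 * coord_prob c \<psi> ^ 2)) / 4"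
      using that by (rule expect_coord_prob_sq_mult_mult)
    also have "\<dots> = (4 / N + 4 / N) / 4"
      using that by (simp add: pow22)
    also have "\<dots> = 2 / N"
      using \<open>N \<noteq> 0\<close> by (simp add: field_simps)
    finally show ?thesis .
  qed
  show pow1111: "expect (\<lambda>\<psi>. coord_prob a \<psi> * coord_prob b \<psi> * coord_prob c \<psi> * coord_prob e \<psi>) = 1 / N"
    if "distinct [a, b, c, e]" for a b c e
  proof -
    have "expect (\<lambda>\<psi>. coord_prob a \<psi> * coord_prob b \<psi> * coord_prob c \<psi> * coord_prob e \<psi>) =
      (expect (\<lambda>\<psi>. coord_prob a \<psi> ^ 2 * coord_prob c \<psi> * coord_prob e \<psi>)
        + expect (\<lambda>\<psi>. coord_prob b \<psi> ^ 2 * coord_prob c \<psi> * coord_prob e \<psi>)) / 4"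
      using that by (rule expect_coord_prob_mult4)
    also have "\<dots> = (2 / N + 2 / N) / 4"
      using that by (simp add: pow211)
    also have "\<dots> = 1 / N"
      using \<open>N \<noteq> 0\<close> by (simp add: field_simps)
    finally show ?thesis .
  qed
qed

text \<open>Once simp has sorted a product of four coordinate probabilities by AC-rewriting, equal
  indices are adjacent and the product has one of these eight shapes.\<close>
lemma expect_coord_prob_monomials4:
  fixes x y z w :: 'n
  defines "N \<equiv> pochhammer (of_nat CARD('n)) 4 :: complex"
  shows "expect (\<lambda>\<psi>. coord_prob x \<psi> * (coord_prob x \<psi> * (coord_prob x \<psi> * coord_prob x \<psi>))) = 24 / N"
    and "x \<noteq> y \<Longrightarrow>
        expect (\<lambda>\<psi>. coord_prob x \<psi> * (coord_prob x \<psi> * (coord_prob x \<psi> * coord_prob y \<psi>))) = 6 / N"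
    and "x \<noteq> y \<Longrightarrow>
        expect (\<lambda>\<psi>. coord_prob x \<psi> * (coord_prob y \<psi> * (coord_prob y \<psi> * coord_prob y \<psi>))) = 6 / N"
    and "x \<noteq> y \<Longrightarrow>
        expect (\<lambda>\<psi>. coord_prob x \<psi> * (coord_prob x \<psi> * (coord_prob y \<psi> * coord_prob y \<psi>))) = 4 / N"
    and "distinct [x, y, z] \<Longrightarrow>
        expect (\<lambda>\<psi>. coord_prob x \<psi> * (coord_prob x \<psi> * (coord_prob y \<psi> * coord_prob z \<psi>))) = 2 / N"
    and "distinct [x, y, z] \<Longrightarrow>
        expect (\<lambda>\<psi>. coord_prob x \<psi> * (coord_prob y \<psi> * (coord_prob y \<psi> * coord_prob z \<psi>))) = 2 / N"
    and "distinct [x, y, z] \<Longrightarrow>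
        expect (\<lambda>\<psi>. coord_prob x \<psi> * (coord_prob y \<psi> * (coord_prob z \<psi> * coord_prob z \<psi>))) = 2 / N"
    and "distinct [x, y, z, w] \<Longrightarrow>
        expect (\<lambda>\<psi>. coord_prob x \<psi> * (coord_prob y \<psi> * (coord_prob z \<psi> * coord_prob w \<psi>))) = 1 / N"
proof -
  note simps = N_def power2_eq_square power3_eq_cube power4_eq_xxxx mult_ac
  show "expect (\<lambda>\<psi>. coord_prob x \<psi> * (coord_prob x \<psi> * (coord_prob x \<psi> * coord_prob x \<psi>))) = 24 / N"
    using expect_coord_prob_deg4(1)[of x] by (simp add: simps)
  show "x \<noteq> y \<Longrightarrow>
      expect (\<lambda>\<psi>. coord_prob x \<psi> * (coord_prob x \<psi> * (coord_prob x \<psi> * coord_prob y \<psi>))) = 6 / N"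
    using expect_coord_prob_deg4(2)[of x y] by (simp add: simps)
  show "x \<noteq> y \<Longrightarrow>
      expect (\<lambda>\<psi>. coord_prob x \<psi> * (coord_prob y \<psi> * (coord_prob y \<psi> * coord_prob y \<psi>))) = 6 / N"
    using expect_coord_prob_deg4(2)[of y x] by (auto simp: simps)
  show "x \<noteq> y \<Longrightarrow>
      expect (\<lambda>\<psi>. coord_prob x \<psi> * (coord_prob x \<psi> * (coord_prob y \<psi> * coord_prob y \<psi>))) = 4 / N"
    using expect_coord_prob_deg4(3)[of x y] by (simp add: simps)
  show "distinct [x, y, z] \<Longrightarrow>
      expect (\<lambda>\<psi>. coord_prob x \<psi> * (coord_prob x \<psi> * (coord_prob y \<psi> * coord_prob z \<psi>))) = 2 / N"
    using expect_coord_prob_deg4(4)[of x y z] by (simp add: simps)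
  show "distinct [x, y, z] \<Longrightarrow>
      expect (\<lambda>\<psi>. coord_prob x \<psi> * (coord_prob y \<psi> * (coord_prob y \<psi> * coord_prob z \<psi>))) = 2 / N"
    using expect_coord_prob_deg4(4)[of y x z] by (auto simp: simps)
  show "distinct [x, y, z] \<Longrightarrow>
      expect (\<lambda>\<psi>. coord_prob x \<psi> * (coord_prob y \<psi> * (coord_prob z \<psi> * coord_prob z \<psi>))) = 2 / N"
    using expect_coord_prob_deg4(4)[of z x y] by (auto simp: simps)
  show "distinct [x, y, z, w] \<Longrightarrow>
      expect (\<lambda>\<psi>. coord_prob x \<psi> * (coord_prob y \<psi> * (coord_prob z \<psi> * coord_prob w \<psi>))) = 1 / N"
    using expect_coord_prob_deg4(5)[of x y z w] by (simp add: simps)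
qed

lemma expect_prod_coord_prob:
  assumes "length I \<in> {2, 4}"
  shows "expect (\<lambda>\<psi>. \<Prod>r\<leftarrow>I. coord_prob r \<psi>) =
    of_nat (matching_count I (mset I)) / pochhammer (of_nat CARD('n)) (length I)"
proof -
  consider a b where "I = [a, b]" | a b c e where "I = [a, b, c, e]"
    using assms by (auto simp: length_Suc_conv numeral_eq_Suc)
  then show ?thesis
  proof cases
    case 1
    then show ?thesis
      by (cases "a = b") (simp_all add: expect_coord_prob_monomials2 add_mset_commute numeral_2_eq_2)
  next
    case 2
    then show ?thesis
      by (cases "a = b"; cases "a = c"; cases "a = e"; cases "b = c"; cases "b = e"; cases "c = e")
        (simp_all add: expect_coord_prob_monomials4 mult_ac add_mset_commute neq_commute eval_nat_numeral)
      \<comment> \<open>\<open>neq_commute\<close> orients the case hypotheses like the side conditions of the rules\<close>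
  qed
qed

lemma expect_monomial:
  assumes "length I \<in> {2, 4}"
  shows "expect (monomial I J) = of_nat (matching_count I (mset J)) / pochhammer (of_nat CARD('n)) (length I)"
proof (cases "mset I = mset J")
  case True
  then show ?thesis
    using expect_prod_coord_prob[OF assms] by (simp add: monomial_eq_prod_coord_prob)
qed (simp add: expect_monomial_unbalanced matching_count_eq_0)

lemma expect_prod_braket:
  assumes "length As \<in> {2, 4}"
  shows "expect (\<lambda>\<psi>. \<Prod>A\<leftarrow>As. braket \<psi> A) = wick_contraction As / pochhammer (of_nat CARD('n)) (length As)"
proof -
  have "expect (\<lambda>\<psi>. \<Prod>A\<leftarrow>As. braket \<psi> A) =
      (\<Sum>I | length I = length As. \<Sum>J | length J = length As. entry_prod As I J * expect (monomial I J))"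
    by (simp add: prod_braket_eq_sum_monomial expect_sum continuous_intros)
  also have "\<dots> = (\<Sum>I | length I = length As. \<Sum>J | length J = length As.
      entry_prod As I J * of_nat (matching_count I (mset J)) / pochhammer (of_nat CARD('n)) (length As))"
    using assms by (intro sum.cong refl) (simp add: expect_monomial)
  finally show ?thesis
    by (simp add: wick_contraction_def sum_divide_distrib)
qed

lemma integral_cmod_braket_sq:
  assumes "unitary_cmat X"
  shows "(\<integral>\<psi>. (cmod (braket \<psi> X))^2 \<partial>M) =
    (real CARD('n) + (cmod (trace X))^2) / (real CARD('n) * (real CARD('n) + 1))"
proof -
  have "complex_of_real (\<integral>\<psi>. (cmod (braket \<psi> X))^2 \<partial>M) = expect (\<lambda>\<psi>. \<Prod>A\<leftarrow>[X, cmat_adj X]. braket \<psi> A)"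
    by (simp add: of_real_cmod_power cnj_braket flip: integral_complex_of_real)
  also have "\<dots> = wick_contraction [X, cmat_adj X] / (of_nat CARD('n) * (of_nat CARD('n) + 1))"
    using expect_prod_braket[of "[X, cmat_adj X]"] by (simp add: pochhammer_Suc)
  also have "\<dots> = complex_of_real ((real CARD('n) + (cmod (trace X))^2) / (real CARD('n) * (real CARD('n) + 1)))"
    using wick_contraction_unitary(1)[OF assms] by (simp add: of_real_cmod_power)
  finally show ?thesis
    by (simp only: of_real_eq_iff)
qed

lemma integral_cmod_braket_pow4:
  assumes "unitary_cmat X"
  shows "(\<integral>\<psi>. (cmod (braket \<psi> X))^4 \<partial>M) =
    (2 * real CARD('n) * (real CARD('n) + 3) + 4 * (real CARD('n) + 2) * (cmod (trace X))^2
      + (cmod (trace (X ** X)))^2 + (cmod (trace X))^4 + 2 * Re (trace (X ** X) * (trace (cmat_adj X))^2))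
    / (real CARD('n) * (real CARD('n) + 1) * (real CARD('n) + 2) * (real CARD('n) + 3))"
proof -
  have "complex_of_real (\<integral>\<psi>. (cmod (braket \<psi> X))^4 \<partial>M) =
      expect (\<lambda>\<psi>. \<Prod>A\<leftarrow>[X, cmat_adj X, X, cmat_adj X]. braket \<psi> A)"
    by (simp add: of_real_cmod_power cnj_braket power2_eq_square mult_ac flip: integral_complex_of_real)
  also have "\<dots> = wick_contraction [X, cmat_adj X, X, cmat_adj X]
      / (of_nat CARD('n) * (of_nat CARD('n) + 1) * (of_nat CARD('n) + 2) * (of_nat CARD('n) + 3))"
    using expect_prod_braket[of "[X, cmat_adj X, X, cmat_adj X]"] by (simp add: pochhammer_Suc)
  also have "\<dots> = complex_of_real ((2 * real CARD('n) * (real CARD('n) + 3) + 4 * (real CARD('n) + 2) * (cmod (trace X))^2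
      + (cmod (trace (X ** X)))^2 + (cmod (trace X))^4 + 2 * Re (trace (X ** X) * (trace (cmat_adj X))^2))
    / (real CARD('n) * (real CARD('n) + 1) * (real CARD('n) + 2) * (real CARD('n) + 3)))"
    using wick_contraction_unitary(2)[OF assms]
    by (simp add: of_real_cmod_power of_real_Re trace_cmat_adj del: times_complex.sel)
  finally show ?thesis
    by (simp only: of_real_eq_iff)
qed

end

theorem proposition4:
  fixes X :: "complex^'n^'n" and M :: "(complex^'n) measure"
  assumes "unitary_cmat X" and "haar_state_measure M"
  defines "d \<equiv> real CARD('n)"
  defines "F \<equiv> (\<integral>\<psi>. (cmod (braket \<psi> X))^2 \<partial>M)"
  defines "D2 \<equiv> (\<integral>\<psi>. (cmod (braket \<psi> X))^4 \<partial>M) - F^2"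
  shows "F = (d + (cmod (trace X))^2) / (d * (d + 1)) \<and>
         D2 = (2 * d * (d + 3) + 4 * (d + 2) * (cmod (trace X))^2
               + (cmod (trace (X ** X)))^2 + (cmod (trace X))^4
               + 2 * Re (trace (X ** X) * (trace (cmat_adj X))^2))
             / (d * (d + 1) * (d + 2) * (d + 3)) - F^2"
proof -
  interpret haar_state M
    by (rule haar_state.intro) (rule assms(2))
  show ?thesis
    unfolding D2_def F_def d_def
    using integral_cmod_braket_sq[OF assms(1)] integral_cmod_braket_pow4[OF assms(1)] by simp
qed

end
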